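(* Let \(D\) be a tangle diagram and \(i \mapsto g_i,\ j \mapsto u_j\) be a decorated shadow \(\mathrm{SL}(2,\mathbb{C})\)-coloring of \(D\) (corresponding to the representation \(\rho\) with \(\rho(w_i)=g_i\)), with \(u_0\) the shadow of the topmost region. Let \(\chi\) be the associated octahedral coloring. Then its holonomy agrees with \(\rho\) in the sense that \[ \mathrm{hol}_{\chi, u_0}(w_i) = \rho(w_i) \] for each Wirtinger generator \(w_i\).
   Context: Setting. \(D\) is a diagram of an oriented tangle \(T\); \(\pi(D)\) is the Wirtinger presentation of the fundamental group of the complement, with one generator \(w_i\) per arc (each segment \(i\) has generator \(w_i\)) and relations \(w_{2'} = w_1^{-1} w_2 w_1\) at positive crossings and \(w_{1'} = w_2 w_1 w_2^{-1}\) at negative crossings. For a segment \(i\), \(\uparrow i\) denotes the region above it and \(\downarrow i\) the region below it (w.r.t. the orientation of the segment). Decorated shadow coloring: each segment \(i\) gets \(g_i \in \mathrm{SL}(2,\mathbb{C})\) satisfying the Wirtinger relations and a line \(L_i \subset \mathbb{C}^2\) of row vectors with \(L_i g_i = L_i\), with \(L_{2'} = L_2 g_1\) (positive crossing) and \(L_{1'} = L_1 g_2\) (negative crossing); each region \(j\) gets a nonzero column vector \(u_j\), with \(u_{j'} = g_i u_j\) when \(j'\) is below \(j\) across \(i\). Associated octahedral coloring: choose nonzero \(v_i \in L_i\) and let \(m_i\) satisfy \(v_i g_i = m_i^{-1} v_i\). Assuming admissibility (\(\det(u_j, e_2) \ne 0\) for all regions \(j\), and \(v_i e_2 \ne 0\),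 \(v_i u_{\uparrow i} \ne 0\) for all segments \(i\), where \(e_1,e_2\) are the standard column basis vectors), set \(\chi_i = (a_i,b_i,m_i) = \left( \frac{\det(u_{\downarrow i}, e_2)}{\det(u_{\uparrow i}, e_2)},\ -\frac{v_i e_2}{v_i u_{\uparrow i}},\ m_i\right)\). Holonomy. For an octahedral color \(\chi=(a,b,m)\) let \(\chi^{\uparrow} = \begin{bmatrix} a & 0 \\ (a-1/m)/b & 1\end{bmatrix}\), \(\chi^{\downarrow} = \begin{bmatrix} 1 & (a-m)b \\ 0 & a\end{bmatrix}\), and for a column vector \(u = (u^1,u^2)^{\mathrm T}\) let \(u^{\uparrow} = \begin{bmatrix} u^1 & 0 \\ u^2 & 1\end{bmatrix}\). The fundamental groupoid \(\Pi(D)\) has one object per region and generators \(x_i^{+}\), \(x_i^{-}\) for each segment \(i\) (paths from \(\uparrow i\) to \(\downarrow i\) passing over, respectively under, the segment). The holonomy functor \(\mathrm{Hol}_\chi : \Pi(D) \to \mathrm{GL}(2,\mathbb{C})\) sends \(x_i^+ \mapsto \chi_i^{\uparrow}\) and \(x_i^- \mapsto \chi_i^{\downarrow}\). For a region \(j\), \(s_j^+\) is the over path from the topmost region \(0\) to \(j\) (passing over every strand). The functor \(\mathcal{F}: \pi(D) \to \Pi(D)\) is \(\mathcal{F}(w_i) = s^+_{\uparrow i}\, x_i^+ (x_i^-)^{-1}\, (s^+_{\uparrow i})^{-1}\). Finally \(\mathrm{hol}_{\chi,u_0}(w_i) = u_0^{\uparrow}\, \mathrm{Hol}_\chi(\mathcal{F}(w_i))\,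 (u_0^{\uparrow})^{-1}\). *)

theory Defs
  imports "HOL-Analysis.Analysis"
begin

type_synonym cvec = "complex ^ 2"
type_synonym cmat = "complex ^ 2 ^ 2"

definition mat2 :: "complex \<Rightarrow> complex \<Rightarrow> complex \<Rightarrow> complex \<Rightarrow> cmat" where
  "mat2 a b c d = (\<chi> r s. if r = 1 then (if s = 1 then a else b) else (if s = 1 then c else d))"

definition e1 :: cvec where "e1 = axis 1 1"
definition e2 :: cvec where "e2 = axis 2 1"

definition det_cols :: "cvec \<Rightarrow> cvec \<Rightarrow> complex" where
  "det_cols u w = det (\<chi> r s. if s = 1 then u $ r else w $ r)"

definition rowcol :: "cvec \<Rightarrow> cvec \<Rightarrow> complex" where
  "rowcol v u = (\<Sum>k\<in>UNIV. v $ k * u $ k)"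

definition is_cline :: "cvec set \<Rightarrow> bool" where
  "is_cline L \<longleftrightarrow> (\<exists>w. w \<noteq> 0 \<and> L = {c *s w | c. True})"

definition in_SL2 :: "cmat \<Rightarrow> bool" where
  "in_SL2 g \<longleftrightarrow> det g = 1"

text \<open>A crossing is recorded as (positive?, seg 1, seg 2, seg 1', seg 2'):
  segments 1, 2 are the incoming and 1', 2' the outgoing segments.
  At a positive crossing strand 1 is over (1 continues to 1', 2 to 2');
  at a negative crossing strand 2 is over.\<close>
type_synonym 's crossing = "bool \<times> 's \<times> 's \<times> 's \<times> 's"

record ('s, 'r) diagram =
  segs :: "'s set"
  regs :: "'r set"
  top_reg :: 'r
  above :: "'s \<Rightarrow> 'r"
  below :: "'s \<Rightarrow> 'r"
  crossings :: "'s crossing set"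

definition wf_diagram :: "('s, 'r) diagram \<Rightarrow> bool" where
  "wf_diagram D \<longleftrightarrow> finite (segs D) \<and> finite (regs D) \<and> top_reg D \<in> regs D \<and>
     (\<forall>i\<in>segs D. above D i \<in> regs D \<and> below D i \<in> regs D) \<and>
     (\<forall>(s, i1, i2, o1, o2)\<in>crossings D. i1 \<in> segs D \<and> i2 \<in> segs D \<and> o1 \<in> segs D \<and> o2 \<in> segs D)"

definition decorated_shadow_coloring ::
  "('s, 'r) diagram \<Rightarrow> ('s \<Rightarrow> cmat) \<Rightarrow> ('s \<Rightarrow> cvec set) \<Rightarrow> ('r \<Rightarrow> cvec) \<Rightarrow> bool" where
  "decorated_shadow_coloring D g L u \<longleftrightarrow>
     (\<forall>i\<in>segs D. in_SL2 (g i) \<and> is_cline (L i) \<and> (\<lambda>x. x v* g i) ` L i = L i) \<and>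
     (\<forall>(pos, i1, i2, o1, o2)\<in>crossings D.
        (pos \<longrightarrow> g o1 = g i1 \<and> g o2 = matrix_inv (g i1) ** g i2 ** g i1 \<and>
                 L o1 = L i1 \<and> L o2 = (\<lambda>x. x v* g i1) ` L i2) \<and>
        (\<not> pos \<longrightarrow> g o2 = g i2 \<and> g o1 = g i2 ** g i1 ** matrix_inv (g i2) \<and>
                 L o2 = L i2 \<and> L o1 = (\<lambda>x. x v* g i2) ` L i1)) \<and>
     (\<forall>j\<in>regs D. u j \<noteq> 0) \<and>
     (\<forall>i\<in>segs D. u (below D i) = g i *v u (above D i))"

definition admissible :: "('s, 'r) diagram \<Rightarrow> ('r \<Rightarrow> cvec) \<Rightarrow> ('s \<Rightarrow> cvec) \<Rightarrow> bool" where
  "admissible D u v \<longleftrightarrow>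
     (\<forall>j\<in>regs D. det_cols (u j) e2 \<noteq> 0) \<and>
     (\<forall>i\<in>segs D. rowcol (v i) e2 \<noteq> 0 \<and> rowcol (v i) (u (above D i)) \<noteq> 0)"

definition oct_color ::
  "('s, 'r) diagram \<Rightarrow> ('r \<Rightarrow> cvec) \<Rightarrow> ('s \<Rightarrow> cvec) \<Rightarrow> ('s \<Rightarrow> complex) \<Rightarrow> 's \<Rightarrow> complex \<times> complex \<times> complex" where
  "oct_color D u v m i =
     (det_cols (u (below D i)) e2 / det_cols (u (above D i)) e2,
      - rowcol (v i) e2 / rowcol (v i) (u (above D i)),
      m i)"

definition chi_up :: "complex \<times> complex \<times> complex \<Rightarrow> cmat" where
  "chi_up c = (case c of (a, b, m) \<Rightarrow> mat2 a 0 ((a - 1 / m) / b) 1)"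

definition chi_down :: "complex \<times> complex \<times> complex \<Rightarrow> cmat" where
  "chi_down c = (case c of (a, b, m) \<Rightarrow> mat2 1 ((a - m) * b) 0 a)"

definition vec_up :: "cvec \<Rightarrow> cmat" where
  "vec_up w = mat2 (w $ 1) 0 (w $ 2) 1"

text \<open>An over path in the fundamental groupoid: a word in the generators \<open>x_k^+\<close>
  and their inverses. A step (k, True) is \<open>x_k^+\<close> (from \<open>\<up>k\<close> to \<open>\<down>k\<close>),
  a step (k, False) is \<open>(x_k^+)^{-1}\<close> (from \<open>\<down>k\<close> to \<open>\<up>k\<close>).\<close>
fun over_path :: "('s, 'r) diagram \<Rightarrow> 'r \<Rightarrow> ('s \<times> bool) list \<Rightarrow> 'r \<Rightarrow> bool" where
  "over_path D r [] r' \<longleftrightarrow> r = r'"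
| "over_path D r ((k, True) # p) r' \<longleftrightarrow>
     k \<in> segs D \<and> above D k = r \<and> over_path D (below D k) p r'"
| "over_path D r ((k, False) # p) r' \<longleftrightarrow>
     k \<in> segs D \<and> below D k = r \<and> over_path D (above D k) p r'"

text \<open>Holonomy functor on a word of over-crossing generators
  (composition of paths left to right is sent to matrix product left to right).\<close>
fun Hol_over :: "('s \<Rightarrow> complex \<times> complex \<times> complex) \<Rightarrow> ('s \<times> bool) list \<Rightarrow> cmat" where
  "Hol_over col [] = mat 1"
| "Hol_over col ((k, True) # p) = chi_up (col k) ** Hol_over col p"
| "Hol_over col ((k, False) # p) = matrix_inv (chi_up (col k)) ** Hol_over col p"

text \<open>\<open>hol_{\<chi>,u0}(w_i)\<close>, computed via \<open>F(w_i) = s x_i^+ (x_i^-)^{-1} s^{-1}\<close>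
  where s is the over path (given as a word) from the top region to \<open>\<up>i\<close>.\<close>
definition hol_w :: "('s \<Rightarrow> complex \<times> complex \<times> complex) \<Rightarrow> cvec \<Rightarrow> ('s \<times> bool) list \<Rightarrow> 's \<Rightarrow> cmat" where
  "hol_w col u0 s i =
     vec_up u0 ** (Hol_over col s ** chi_up (col i) ** matrix_inv (chi_down (col i))
                   ** matrix_inv (Hol_over col s)) ** matrix_inv (vec_up u0)"

end

theory Submission
  imports Defs
begin

(* Write U r for the matrix vec_up (u r) = [u r | e2] and col for the octahedral colouring. It is
   designed so that for every segment k
     U (above k) ** chi_up (col k) = U (below k)   and   g k ** U (above k) ** chi_down (col k) = U (below k):
   the first identity comes from v_k g_k = m_k^-1 v_k, the second from v_k g_k^-1 = m_k v_k and
   det g_k = 1. By the first, the holonomy of an over path from r to r' carries U r to U r', so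
   U top ** Hol s = U (above i) and hol (w_i) = U (above i) chi_up (chi_down)^-1 U (above i)^-1,
   which is g i by the second. *)

lemma mat2_nth [simp]:
  "mat2 a b c d $ 1 $ 1 = a" "mat2 a b c d $ 1 $ 2 = b"
  "mat2 a b c d $ 2 $ 1 = c" "mat2 a b c d $ 2 $ 2 = d"
  by (simp_all add: mat2_def)

lemma mat2_eta: "A = mat2 (A$1$1) (A$1$2) (A$2$1) (A$2$2)"
  by (simp add: vec_eq_iff forall_2)

lemma mat2_eq_iff: "mat2 a b c d = mat2 a' b' c' d' \<longleftrightarrow> a = a' \<and> b = b' \<and> c = c' \<and> d = d'"
  by (auto simp add: vec_eq_iff forall_2)

lemma mat2_mult:
  "mat2 a b c d ** mat2 a' b' c' d' =
     mat2 (a*a' + b*c') (a*b' + b*d') (c*a' + d*c') (c*b' + d*d')"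
  by (simp add: vec_eq_iff forall_2 matrix_matrix_mult_def sum_2)

lemma mat_1_eq_mat2: "mat 1 = mat2 1 0 0 1"
  by (simp add: vec_eq_iff forall_2 mat_def)

lemma det_mat2: "det (mat2 a b c d) = a*d - b*c"
  by (simp add: det_2)

lemma cmat_mult_vec_nth [simp]:
  fixes A :: cmat
  shows "(A *v x) $ 1 = A$1$1 * x$1 + A$1$2 * x$2" "(A *v x) $ 2 = A$2$1 * x$1 + A$2$2 * x$2"
  by (simp_all add: matrix_vector_mult_def sum_2)

lemma vec_mult_cmat_nth [simp]:
  fixes A :: cmat
  shows "(x v* A) $ 1 = x$1 * A$1$1 + x$2 * A$2$1" "(x v* A) $ 2 = x$1 * A$1$2 + x$2 * A$2$2"
  by (simp_all add: vector_matrix_mult_def sum_2)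

lemma rowcol_eq: "rowcol v w = v$1 * w$1 + v$2 * w$2"
  by (simp add: rowcol_def sum_2)

lemma rowcol_e2: "rowcol v e2 = v$2"
  by (simp add: rowcol_eq e2_def axis_def)

lemma det_cols_e2: "det_cols w e2 = w$1"
  by (simp add: det_cols_def det_2 e2_def axis_def)

lemma rowcol_matrix_vector_mult: "rowcol v (A *v w) = rowcol (v v* A) w"
  by (simp add: rowcol_eq algebra_simps)

lemma rowcol_scalar_mult: "rowcol (c *s v) w = c * rowcol v w"
  by (simp add: rowcol_eq algebra_simps)

lemma invertible_vec_up: "invertible (vec_up w) \<longleftrightarrow> w$1 \<noteq> 0"
  by (simp add: invertible_det_nz vec_up_def det_mat2)

lemma invertible_chi_up: "invertible (chi_up (a, b, m)) \<longleftrightarrow> a \<noteq> 0"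
  by (simp add: invertible_det_nz chi_up_def det_mat2)

lemma invertible_chi_down: "invertible (chi_down (a, b, m)) \<longleftrightarrow> a \<noteq> 0"
  by (simp add: invertible_det_nz chi_down_def det_mat2)

lemma matrix_inv_right:
  fixes A :: "'a::semiring_1^'n^'m"
  assumes "invertible A" shows "A ** matrix_inv A = mat 1"
  using someI_ex[OF assms[unfolded invertible_def]] by (simp add: matrix_inv_def)

lemma matrix_inv_left:
  fixes A :: "'a::semiring_1^'n^'m"
  assumes "invertible A" shows "matrix_inv A ** A = mat 1"
  using someI_ex[OF assms[unfolded invertible_def]] by (simp add: matrix_inv_def)

lemma matrix_inv_unique:
  fixes A :: "'a::semiring_1^'n^'m"
  assumes AB: "A ** B = mat 1" and BA: "B ** A = mat 1"
  shows "matrix_inv A = B"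
proof -
  have inv: "invertible A" using AB BA by (auto simp: invertible_def)
  have "matrix_inv A = matrix_inv A ** (A ** B)" by (simp add: AB)
  also have "\<dots> = B" by (simp add: matrix_mul_assoc matrix_inv_left[OF inv])
  finally show ?thesis .
qed

lemma matrix_inv_mult:
  fixes A B :: "'a::semiring_1^'n^'n"
  assumes "invertible A" "invertible B"
  shows "matrix_inv (A ** B) = matrix_inv B ** matrix_inv A"
  by (rule matrix_inv_unique)
    (simp_all add: matrix_mul_assoc
      flip: matrix_mul_assoc[of A B] matrix_mul_assoc[of "matrix_inv B" "matrix_inv A"]
      add: assms matrix_inv_right matrix_inv_left)

lemma matrix_inv_SL2:
  fixes g :: cmat
  assumes "det g = 1"
  shows "matrix_inv g = mat2 (g$2$2) (- g$1$2) (- g$2$1) (g$1$1)"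
proof -
  obtain a b c d where g: "g = mat2 a b c d" using mat2_eta by blast
  have "a*d - b*c = 1" using assms by (simp add: g det_mat2)
  then show ?thesis
    by (simp add: g, intro matrix_inv_unique)
      (simp_all add: mat2_mult mat_1_eq_mat2 mat2_eq_iff algebra_simps)
qed

lemma left_eigenvector_matrix_inv:
  fixes g :: "'a::field^'n^'n"
  assumes "invertible g" "v v* g = c *s v"
  shows "c *s (v v* matrix_inv g) = v"
  by (metis assms scalar_vector_matrix_assoc vector_matrix_mul_assoc matrix_inv_right
      vector_matrix_mul_rid)

lemma left_eigenvalue_nonzero:
  fixes g :: "'a::field^'n^'n"
  assumes "invertible g" "v \<noteq> 0" "v v* g = c *s v"
  shows "c \<noteq> 0"
  using left_eigenvector_matrix_inv[OF assms(1,3)] assms(2) by auto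

lemma vec_up_mult_chi_up:
  fixes g :: cmat and p v :: cvec
  assumes eigen: "v v* g = (1/m) *s v"
    and "m \<noteq> 0" "p$1 \<noteq> 0" "v$2 \<noteq> 0" "rowcol v p \<noteq> 0"
  shows "vec_up p ** chi_up ((g *v p)$1 / p$1, - v$2 / rowcol v p, m) = vec_up (g *v p)"
proof -
  define q where "q = g *v p"
  have "rowcol v q = rowcol ((1/m) *s v) p"
    by (simp only: q_def rowcol_matrix_vector_mult eigen)
  also have "\<dots> = rowcol v p / m"
    by (simp add: rowcol_scalar_mult)
  finally have "v$1 * q$1 + v$2 * q$2 = (v$1 * p$1 + v$2 * p$2) / m"
    by (simp add: rowcol_eq)
  with assms(2-5) have "p$2 * (q$1 / p$1) + (q$1 / p$1 - 1/m) / (- v$2 / rowcol v p) = q$2"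
    by (simp add: rowcol_eq field_simps) algebra
  with assms(3) show ?thesis
    unfolding q_def[symmetric] by (simp add: vec_up_def chi_up_def mat2_mult mat2_eq_iff)
qed

lemma mult_vec_up_mult_chi_down:
  fixes g :: cmat and p v :: cvec
  assumes "det g = 1" and inv_eigen: "v v* matrix_inv g = m *s v"
    and "p$1 \<noteq> 0" "rowcol v p \<noteq> 0"
  shows "g ** vec_up p ** chi_down ((g *v p)$1 / p$1, - v$2 / rowcol v p, m) = vec_up (g *v p)"
proof -
  define q where "q = g *v p"
  have "v$2 * g$1$1 - v$1 * g$1$2 = m * v$2"
    using arg_cong[OF inv_eigen, of "\<lambda>x. x$2"] by (simp add: matrix_inv_SL2[OF assms(1)])
  then have "(q$1 - m * p$1) * v$2 = g$1$2 * rowcol v p"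
    by (simp add: q_def rowcol_eq algebra_simps)
  with assms(3,4) have "(q$1 / p$1 - m) * (- v$2 / rowcol v p) = - g$1$2 / p$1"
    by (simp add: field_simps)
  then have "chi_down (q$1 / p$1, - v$2 / rowcol v p, m) = mat2 1 (- g$1$2 / p$1) 0 (q$1 / p$1)"
    by (simp add: chi_down_def)
  moreover have "g ** vec_up p = mat2 (q$1) (g$1$2) (q$2) (g$2$2)"
    by (subst mat2_eta[of g]) (simp add: q_def vec_up_def mat2_mult)
  moreover have "g$2$2 * q$1 - q$2 * g$1$2 = p$1"
    using assms(1) by (simp add: q_def det_2 algebra_simps)
  ultimately show ?thesis
    unfolding q_def[symmetric] using assms(3)
    by (simp add: vec_up_def mat2_mult mat2_eq_iff field_simps)
qed

lemma oct_color_eq: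
  "oct_color D u v m k =
     (u (below D k) $ 1 / u (above D k) $ 1, - v k $ 2 / rowcol (v k) (u (above D k)), m k)"
  by (simp add: oct_color_def det_cols_e2 rowcol_e2)

lemma oct_color_segment_relations:
  assumes wf: "wf_diagram D"
    and dsc: "decorated_shadow_coloring D g L u"
    and eigen: "\<forall>i\<in>segs D. v i \<in> L i \<and> v i \<noteq> 0 \<and> v i v* g i = (1 / m i) *s v i"
    and adm: "admissible D u v"
    and k: "k \<in> segs D"
  shows "vec_up (u (above D k)) ** chi_up (oct_color D u v m k) = vec_up (u (below D k))"
    and "g k ** vec_up (u (above D k)) ** chi_down (oct_color D u v m k) = vec_up (u (below D k))"
    and "invertible (chi_up (oct_color D u v m k))"
    and "invertible (chi_down (oct_color D u v m k))"
proof -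
  have det: "det (g k) = 1" and below: "u (below D k) = g k *v u (above D k)"
    using dsc k by (auto simp: decorated_shadow_coloring_def in_SL2_def)
  then have inv: "invertible (g k)" by (simp add: invertible_det_nz)
  have vk: "v k \<noteq> 0" "v k v* g k = (1 / m k) *s v k" using eigen k by auto
  then have "1 / m k \<noteq> 0" using left_eigenvalue_nonzero[OF inv] by blast
  then have m: "m k \<noteq> 0" by simp
  have "m k *s v k = m k *s ((1 / m k) *s (v k v* matrix_inv (g k)))"
    using left_eigenvector_matrix_inv[OF inv vk(2)] by simp
  then have inv_eigen: "v k v* matrix_inv (g k) = m k *s v k"
    using m by (simp add: vector_smult_assoc)
  have regs: "above D k \<in> regs D" "below D k \<in> regs D"
    using wf k by (auto simp: wf_diagram_def)
  have nz: "u (above D k) $ 1 \<noteq> 0" "v k $ 2 \<noteq> 0" "rowcol (v k) (u (above D k)) \<noteq> 0"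
    and "u (below D k) $ 1 \<noteq> 0"
    using adm regs k by (auto simp: admissible_def det_cols_e2 rowcol_e2)
  then show "invertible (chi_up (oct_color D u v m k))"
    and "invertible (chi_down (oct_color D u v m k))"
    by (simp_all add: oct_color_eq invertible_chi_up invertible_chi_down)
  show "vec_up (u (above D k)) ** chi_up (oct_color D u v m k) = vec_up (u (below D k))"
    unfolding oct_color_eq below using vec_up_mult_chi_up[OF vk(2) m nz] .
  show "g k ** vec_up (u (above D k)) ** chi_down (oct_color D u v m k) = vec_up (u (below D k))"
    unfolding oct_color_eq below using mult_vec_up_mult_chi_down[OF det inv_eigen nz(1,3)] .
qed

lemma over_path_mult_Hol_over:
  fixes U :: "'r \<Rightarrow> cmat"
  assumes step: "\<And>k. k \<in> segs D \<Longrightarrow>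
      U (above D k) ** chi_up (col k) = U (below D k) \<and> invertible (chi_up (col k))"
  shows "over_path D r s r' \<Longrightarrow> U r ** Hol_over col s = U r'"
proof (induction s arbitrary: r)
  case Nil
  then show ?case by simp
next
  case (Cons x s)
  obtain k b where x: "x = (k, b)" by fastforce
  show ?case
  proof (cases b)
    case True
    with Cons.prems have k: "k \<in> segs D" "r = above D k" "over_path D (below D k) s r'"
      by (auto simp: x)
    have "U r ** Hol_over col (x # s) = (U r ** chi_up (col k)) ** Hol_over col s"
      by (simp add: x True matrix_mul_assoc)
    also have "\<dots> = U r'" using step k Cons.IH by simp
    finally show ?thesis .
  next
    case False
    with Cons.prems have k: "k \<in> segs D" "r = below D k" "over_path D (above D k) s r'"
      by (auto simp: x)
    with step have "U r ** matrix_inv (chi_up (col k)) = U (above D k)"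
      by (metis matrix_inv_right matrix_mul_assoc matrix_mul_rid)
    then have "U r ** Hol_over col (x # s) = U (above D k) ** Hol_over col s"
      by (simp add: x False matrix_mul_assoc)
    also have "\<dots> = U r'" using k Cons.IH by simp
    finally show ?thesis .
  qed
qed

theorem theoremA:
  fixes D :: "('s, 'r) diagram"
    and g :: "'s \<Rightarrow> cmat" and L :: "'s \<Rightarrow> cvec set" and u :: "'r \<Rightarrow> cvec"
    and v :: "'s \<Rightarrow> cvec" and m :: "'s \<Rightarrow> complex"
  assumes "wf_diagram D"
    and "decorated_shadow_coloring D g L u"
    and "\<forall>i\<in>segs D. v i \<in> L i \<and> v i \<noteq> 0 \<and> v i v* g i = (1 / m i) *s v i"
    and "admissible D u v"
    and "i \<in> segs D"
    and "over_path D (top_reg D) s (above D i)"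
  shows "hol_w (oct_color D u v m) (u (top_reg D)) s i = g i"
proof -
  define col where "col = oct_color D u v m"
  define U where "U r = vec_up (u r)" for r
  define H where "H = Hol_over col s"
  note seg = oct_color_segment_relations[OF assms(1-4), folded col_def U_def]
  have path: "U (top_reg D) ** H = U (above D i)"
    unfolding H_def using over_path_mult_Hol_over[OF _ assms(6)] seg(1,3) by blast
  have "invertible (U r)" if "r \<in> regs D" for r
    using assms(4) that by (simp add: U_def invertible_vec_up admissible_def det_cols_e2)
  then have invU: "invertible (U (top_reg D))" "invertible (U (above D i))"
    using assms(1,5) by (auto simp: wf_diagram_def)
  then have "invertible H"
    using path by (metis invertible_det_nz det_mul mult_zero_right)
  then have "hol_w col (u (top_reg D)) s i
      = (U (top_reg D) ** H) ** chi_up (col i) ** matrix_inv (chi_down (col i))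
          ** matrix_inv (U (top_reg D) ** H)"
    using invU by (simp add: hol_w_def U_def H_def matrix_inv_mult matrix_mul_assoc)
  also have "\<dots> = U (above D i) ** chi_up (col i) ** matrix_inv (chi_down (col i))
          ** matrix_inv (U (above D i))"
    by (simp only: path)
  also have "\<dots> = g i ** U (above D i) ** chi_down (col i) ** matrix_inv (chi_down (col i))
          ** matrix_inv (U (above D i))"
    by (simp only: seg(1)[OF assms(5)] flip: seg(2)[OF assms(5)])
  also have "\<dots> = g i"
    using seg(4)[OF assms(5)] invU(2) by (simp add: matrix_inv_right flip: matrix_mul_assoc)
  finally show ?thesis unfolding col_def .
qed

end
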